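(* Let $A$ be a densely defined closed operator in a complex Hilbert space $\mathcal{H}$ such that $\operatorname{Num}(A)$ has an interior point and $\operatorname{Num}(A)\neq\mathbb{C}$. Let $\lambda\in\partial\operatorname{Num}(A)$ be a point of infinite upper curvature of $\partial\overline{\operatorname{Num}}(A)$. If $\lambda\in\operatorname{Num}(A)$, then $\lambda$ is an eigenvalue of $A$.
   Context: $\operatorname{Num}(A)=\{\langle Af,f\rangle: f\in\operatorname{D}(A),\|f\|=1\}$ is the numerical range (a convex set), $\overline{\operatorname{Num}}(A)$ its closure. Curvature conventions. Let $\Omega\subset\mathbb{C}$ be a closed convex set with nonempty interior and $\lambda\in\partial\Omega$. There is at least one supporting line of $\Omega$ through $\lambda$; $\lambda$ is called a corner point if there is more than one. If $\lambda$ is a corner point, $\Omega$ lies in a closed sector with vertex $\lambda$ and semivertical angle $<\pi/2$; take the smallest such sector and let $l_\lambda$ be the supporting line through $\lambda$ orthogonal to the axis of this sector; otherwise $l_\lambda$ is the unique supporting line. Use rectangular coordinates $(\xi,\eta)$ with origin at $\lambda$, $\xi$-axis equal to $l_\lambda$, oriented so that $\Omega\subset\{\eta\ge 0\}$. Let $D'_\varepsilon=\{(\xi,\eta):\xi^2+\eta^2\le\varepsilon^2,\ \xi\neq 0\}$. Define $\gamma_u^+(\lambda)=\lim_{\varepsilon\downarrow 0}\sup\{\eta/\xi^2:(\xi,\eta)\in\partial\Omega\cap D'_\varepsilon,\ \xi>0\}$ and $\gamma_l^+(\lambda)$ the same with $\inf$ in place of $\sup$; $\gamma_u^-(\lambda),\gamma_l^-(\lambda)$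 are defined analogously with $\xi<0$. Set $\gamma_u(\lambda)=\max(\gamma_u^+(\lambda),\gamma_u^-(\lambda))$, $\gamma_l(\lambda)=\min(\gamma_l^+(\lambda),\gamma_l^-(\lambda))$. The point $\lambda$ is of infinite upper curvature if $\gamma_u(\lambda)=\infty$, and of unilateral infinite curvature if $\gamma_l^+(\lambda)=\infty$ or $\gamma_l^-(\lambda)=\infty$. For an operator $A$, these notions at $\lambda\in\partial\operatorname{Num}(A)$ refer to $\Omega=\overline{\operatorname{Num}}(A)$. *)

theory Defs
  imports "HOL-Analysis.Analysis"
begin

text \<open>The inner product is linear in the first and conjugate linear in the
  second argument, so the numerical range consists of the values cinner (A f) f.\<close>

class complex_vector = real_vector +
  fixes scaleC :: "complex \<Rightarrow> 'a \<Rightarrow> 'a" (infixr "*\<^sub>C" 75)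
  assumes scaleC_add_right: "a *\<^sub>C (x + y) = a *\<^sub>C x + a *\<^sub>C y"
    and scaleC_add_left: "(a + b) *\<^sub>C x = a *\<^sub>C x + b *\<^sub>C x"
    and scaleC_scaleC: "a *\<^sub>C (b *\<^sub>C x) = (a * b) *\<^sub>C x"
    and scaleC_one: "1 *\<^sub>C x = x"
    and scaleR_scaleC: "scaleR r x = complex_of_real r *\<^sub>C x"

class complex_inner = complex_vector + real_normed_vector +
  fixes cinner :: "'a \<Rightarrow> 'a \<Rightarrow> complex"
  assumes cinner_commute: "cinner x y = cnj (cinner y x)"
    and cinner_add_left: "cinner (x + y) z = cinner x z + cinner y z"
    and cinner_scaleC_left: "cinner (a *\<^sub>C x) y = a * cinner x y"
    and cinner_self_nonneg: "0 \<le> Re (cinner x x)"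
    and norm_eq_sqrt_cinner: "norm x = sqrt (Re (cinner x x))"

class chilbert_space = complex_inner + complete_space

text \<open>Consistency check: the complex numbers form a complex Hilbert space.\<close>

instantiation complex :: chilbert_space
begin
definition scaleC_complex :: "complex \<Rightarrow> complex \<Rightarrow> complex" where
  "scaleC_complex a x = a * x"
definition cinner_complex :: "complex \<Rightarrow> complex \<Rightarrow> complex" where
  "cinner_complex x y = x * cnj y"
instance
proof
  fix a b x y z :: complex and r :: real
  show "a *\<^sub>C (x + y) = a *\<^sub>C x + a *\<^sub>C y" by (simp add: scaleC_complex_def algebra_simps)
  show "(a + b) *\<^sub>C x = a *\<^sub>C x + b *\<^sub>C x" by (simp add: scaleC_complex_def algebra_simps)
  show "a *\<^sub>C (b *\<^sub>C x) = (a * b) *\<^sub>C x" by (simp add: scaleC_complex_def)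
  show "1 *\<^sub>C x = x" by (simp add: scaleC_complex_def)
  show "scaleR r x = complex_of_real r *\<^sub>C x" by (simp add: scaleC_complex_def scaleR_conv_of_real)
  show "cinner x y = cnj (cinner y x)" by (simp add: cinner_complex_def)
  show "cinner (x + y) z = cinner x z + cinner y z" by (simp add: cinner_complex_def algebra_simps)
  show "cinner (a *\<^sub>C x) y = a * cinner x y" by (simp add: cinner_complex_def scaleC_complex_def)
  show "0 \<le> Re (cinner x x)" by (simp add: cinner_complex_def complex_mult_cnj)
  show "norm x = sqrt (Re (cinner x x))"
    by (simp add: cinner_complex_def complex_mult_cnj cmod_def)
qed
end

text \<open>A (possibly unbounded) operator is a map T defined on a domain D (values outside D
  are irrelevant).\<close>

definition linear_operator :: "'a::complex_vector set \<Rightarrow> ('a \<Rightarrow> 'a) \<Rightarrow> bool" where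
  "linear_operator D T \<longleftrightarrow> 0 \<in> D \<and>
     (\<forall>x\<in>D. \<forall>y\<in>D. x + y \<in> D \<and> T (x + y) = T x + T y) \<and>
     (\<forall>c. \<forall>x\<in>D. c *\<^sub>C x \<in> D \<and> T (c *\<^sub>C x) = c *\<^sub>C T x)"

definition densely_defined :: "'a::topological_space set \<Rightarrow> bool" where
  "densely_defined D \<longleftrightarrow> closure D = UNIV"

definition closed_operator :: "'a::complex_inner set \<Rightarrow> ('a \<Rightarrow> 'a) \<Rightarrow> bool" where
  "closed_operator D T \<longleftrightarrow> closed {(x, T x) | x. x \<in> D}"

definition numerical_range :: "'a::complex_inner set \<Rightarrow> ('a \<Rightarrow> 'a) \<Rightarrow> complex set" where
  "numerical_range D T = {cinner (T f) f | f. f \<in> D \<and> norm f = 1}"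

definition eigenvalue :: "'a::complex_vector set \<Rightarrow> ('a \<Rightarrow> 'a) \<Rightarrow> complex \<Rightarrow> bool" where
  "eigenvalue D T \<mu> \<longleftrightarrow> (\<exists>f\<in>D. f \<noteq> 0 \<and> T f = \<mu> *\<^sub>C f)"

definition supporting_line :: "complex set \<Rightarrow> complex \<Rightarrow> complex set \<Rightarrow> bool" where
  "supporting_line \<Omega> \<mu> L \<longleftrightarrow> (\<exists>n. norm n = 1 \<and> L = {z. Re (cnj n * (z - \<mu>)) = 0} \<and>
      ((\<forall>z\<in>\<Omega>. 0 \<le> Re (cnj n * (z - \<mu>))) \<or> (\<forall>z\<in>\<Omega>. Re (cnj n * (z - \<mu>)) \<le> 0)))"

definition corner_point :: "complex set \<Rightarrow> complex \<Rightarrow> bool" where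
  "corner_point \<Omega> \<mu> \<longleftrightarrow> (\<exists>L1 L2. supporting_line \<Omega> \<mu> L1 \<and> supporting_line \<Omega> \<mu> L2 \<and> L1 \<noteq> L2)"

text \<open>Closed sector with vertex \<mu>, axis direction d (a unit vector) and semivertical angle \<alpha>.\<close>

definition sector :: "complex \<Rightarrow> complex \<Rightarrow> real \<Rightarrow> complex set" where
  "sector \<mu> d \<alpha> = {z. cos \<alpha> * norm (z - \<mu>) \<le> Re (cnj d * (z - \<mu>))}"

definition smallest_sector :: "complex set \<Rightarrow> complex \<Rightarrow> complex \<Rightarrow> real \<Rightarrow> bool" where
  "smallest_sector \<Omega> \<mu> d \<alpha> \<longleftrightarrow> norm d = 1 \<and> 0 \<le> \<alpha> \<and> \<alpha> < pi / 2 \<and> \<Omega> \<subseteq> sector \<mu> d \<alpha> \<and>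
     (\<forall>d' \<alpha>'. norm d' = 1 \<and> 0 \<le> \<alpha>' \<and> \<alpha>' < pi / 2 \<and> \<Omega> \<subseteq> sector \<mu> d' \<alpha>' \<longrightarrow>
        sector \<mu> d \<alpha> \<subseteq> sector \<mu> d' \<alpha>')"

text \<open>n is the unit vector in the direction of the positive eta-axis of the curvature
  coordinate system at \<mu>: the xi-axis is the line l_\<mu> = {z. Re (cnj n * (z - \<mu>)) = 0},
  and \<Omega> lies in {eta \<ge> 0}. At a corner point l_\<mu> is orthogonal to the axis d of the
  smallest sector, so n = d; otherwise l_\<mu> is the unique supporting line.\<close>

definition curvature_frame :: "complex set \<Rightarrow> complex \<Rightarrow> complex \<Rightarrow> bool" where
  "curvature_frame \<Omega> \<mu> n \<longleftrightarrow> norm n = 1 \<and> (\<forall>z\<in>\<Omega>. 0 \<le> Re (cnj n * (z - \<mu>))) \<and>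
     (if corner_point \<Omega> \<mu> then (\<exists>\<alpha>. smallest_sector \<Omega> \<mu> n \<alpha>)
      else supporting_line \<Omega> \<mu> {z. Re (cnj n * (z - \<mu>)) = 0})"

text \<open>Coordinates (xi, eta) of z in the frame with origin \<mu> and eta-direction n.
  (The orientation of the xi-axis is irrelevant for the notions used below.)\<close>

definition xi_coord :: "complex \<Rightarrow> complex \<Rightarrow> complex \<Rightarrow> real" where
  "xi_coord \<mu> n z = Im (cnj n * (z - \<mu>))"

definition eta_coord :: "complex \<Rightarrow> complex \<Rightarrow> complex \<Rightarrow> real" where
  "eta_coord \<mu> n z = Re (cnj n * (z - \<mu>))"

definition bdry_right :: "complex set \<Rightarrow> complex \<Rightarrow> complex \<Rightarrow> real \<Rightarrow> complex set" where
  "bdry_right \<Omega> \<mu> n \<epsilon> = {z \<in> frontier \<Omega>.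
     (xi_coord \<mu> n z)\<^sup>2 + (eta_coord \<mu> n z)\<^sup>2 \<le> \<epsilon>\<^sup>2 \<and> xi_coord \<mu> n z \<noteq> 0 \<and> xi_coord \<mu> n z > 0}"

definition bdry_left :: "complex set \<Rightarrow> complex \<Rightarrow> complex \<Rightarrow> real \<Rightarrow> complex set" where
  "bdry_left \<Omega> \<mu> n \<epsilon> = {z \<in> frontier \<Omega>.
     (xi_coord \<mu> n z)\<^sup>2 + (eta_coord \<mu> n z)\<^sup>2 \<le> \<epsilon>\<^sup>2 \<and> xi_coord \<mu> n z \<noteq> 0 \<and> xi_coord \<mu> n z < 0}"

definition curv_quot :: "complex \<Rightarrow> complex \<Rightarrow> complex \<Rightarrow> ereal" where
  "curv_quot \<mu> n z = ereal (eta_coord \<mu> n z / (xi_coord \<mu> n z)\<^sup>2)"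

definition gamma_u_plus :: "complex set \<Rightarrow> complex \<Rightarrow> complex \<Rightarrow> ereal" where
  "gamma_u_plus \<Omega> \<mu> n = Lim (at_right (0::real)) (\<lambda>\<epsilon>. SUP z\<in>bdry_right \<Omega> \<mu> n \<epsilon>. curv_quot \<mu> n z)"

definition gamma_u_minus :: "complex set \<Rightarrow> complex \<Rightarrow> complex \<Rightarrow> ereal" where
  "gamma_u_minus \<Omega> \<mu> n = Lim (at_right (0::real)) (\<lambda>\<epsilon>. SUP z\<in>bdry_left \<Omega> \<mu> n \<epsilon>. curv_quot \<mu> n z)"

definition gamma_u :: "complex set \<Rightarrow> complex \<Rightarrow> complex \<Rightarrow> ereal" where
  "gamma_u \<Omega> \<mu> n = max (gamma_u_plus \<Omega> \<mu> n) (gamma_u_minus \<Omega> \<mu> n)"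

text \<open>\<mu> is of infinite upper curvature (for a closed convex \<Omega> with nonempty interior and
  \<mu> on its boundary; the frame n is then unique).\<close>

definition infinite_upper_curvature :: "complex set \<Rightarrow> complex \<Rightarrow> bool" where
  "infinite_upper_curvature \<Omega> \<mu> \<longleftrightarrow> (\<exists>n. curvature_frame \<Omega> \<mu> n \<and> gamma_u \<Omega> \<mu> n = \<infinity>)"

end

theory Submission
  imports Defs
begin

(* Suppose mu = <A f, f> for a unit vector f of the domain
   but mu is not an eigenvalue, so (A - mu) f is nonzero. Let n be the unit normal of the
   curvature frame at mu: the numerical range lies in the half-plane Re (cnj n (z - mu)) >= 0,
   hence the height Re (cnj n <(A - mu) h, h>) is a nonnegative form on the domain which
   vanishes at f. Using density of the domain and an interior point of the numerical range we
   find g orthogonal to f with <(A - mu) f, g> nonzero and of positive height. The Rayleigh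
   quotients of f + t g (t complex) then fill a parabolic region {0 < eta < h, K xi^2 < eta}
   at mu, which forces the upper curvature of the boundary at mu to be finite. *)

lemma scaleC_zero_right [simp]: "a *\<^sub>C (0::'a::complex_vector) = 0"
  using scaleC_add_right[of a "0::'a" 0] by simp

lemma scaleC_minus_right: "a *\<^sub>C (- x) = - (a *\<^sub>C (x::'a::complex_vector))"
  using scaleC_add_right[of a x "- x"] by (simp add: eq_neg_iff_add_eq_0 add.commute)

lemma scaleC_diff_right: "a *\<^sub>C (x - y) = a *\<^sub>C x - a *\<^sub>C (y::'a::complex_vector)"
  by (simp only: diff_conv_add_uminus scaleC_add_right scaleC_minus_right)

lemma cinner_zero_left [simp]: "cinner 0 y = 0"
  using cinner_add_left[of 0 0 y] by simp

lemma cinner_zero_right [simp]: "cinner x 0 = 0"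
  by (subst cinner_commute) simp

lemma cinner_add_right: "cinner x (y + z) = cinner x y + cinner x z"
  by (subst (1 2 3) cinner_commute) (simp add: cinner_add_left)

lemma cinner_scaleC_right: "cinner x (a *\<^sub>C y) = cnj a * cinner x y"
  by (subst (1 2) cinner_commute) (simp add: cinner_scaleC_left)

lemma cinner_minus_left: "cinner (- x) y = - cinner x y"
  using cinner_add_left[of x "- x" y] by (simp add: eq_neg_iff_add_eq_0 add.commute)

lemma cinner_diff_left: "cinner (x - y) z = cinner x z - cinner y z"
  by (simp only: diff_conv_add_uminus cinner_add_left cinner_minus_left)

lemma cinner_diff_right: "cinner x (y - z) = cinner x y - cinner x z"
  by (subst (1 2 3) cinner_commute) (simp add: cinner_diff_left)

lemma cinner_self_norm: "cinner x x = complex_of_real ((norm x)\<^sup>2)"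
proof -
  have "Im (cinner x x) = 0"
    using arg_cong[OF cinner_commute[of x x], of Im] by simp
  thus ?thesis
    by (simp add: complex_eq_iff norm_eq_sqrt_cinner cinner_self_nonneg)
qed

lemma norm_diff_sq:
  "(norm (x - y))\<^sup>2 = (norm x)\<^sup>2 + (norm y)\<^sup>2 - 2 * Re (cinner x (y::'a::complex_inner))"
proof -
  have sym: "Re (cinner y x) = Re (cinner x y)" by (subst cinner_commute) simp
  have "cinner (x - y) (x - y) = cinner x x - cinner x y - cinner y x + cinner y y"
    by (simp add: cinner_diff_left cinner_diff_right)
  from arg_cong[OF this, of Re] show ?thesis
    using sym by (simp add: cinner_self_norm flip: of_real_power)
qed

lemma cinner_expand:
  "cinner (y + a *\<^sub>C x) (y + a *\<^sub>C x) =
     cinner y y + cnj a * cinner y x + a * cinner x y + a * cnj a * cinner x x"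
  by (simp add: cinner_add_left cinner_add_right cinner_scaleC_left cinner_scaleC_right algebra_simps)

definition parabolic_region :: "complex \<Rightarrow> complex \<Rightarrow> real \<Rightarrow> real \<Rightarrow> complex set" where
  "parabolic_region \<mu> n K h = {y. 0 < eta_coord \<mu> n y \<and> eta_coord \<mu> n y < h \<and>
      K * (xi_coord \<mu> n y)\<^sup>2 < eta_coord \<mu> n y}"

lemma open_parabolic_region: "open (parabolic_region \<mu> n K h)"
  unfolding parabolic_region_def eta_coord_def xi_coord_def
  by (intro open_Collect_conj open_Collect_less continuous_intros)

(* The one-sided limit of a supremum over sets shrinking as e decreases to 0 is bounded by any
  bound valid for all small e (the limit exists, being an infimum of a monotone function). *)
lemma Lim_at_right_SUP_le:
  fixes F :: "'b \<Rightarrow> ereal" and S :: "real \<Rightarrow> 'b set"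
  assumes mono: "\<And>a b. 0 < a \<Longrightarrow> a \<le> b \<Longrightarrow> S a \<subseteq> S b" and h: "0 < h"
    and bound: "\<And>e z. 0 < e \<Longrightarrow> e < h \<Longrightarrow> z \<in> S e \<Longrightarrow> F z \<le> c"
  shows "Lim (at_right 0) (\<lambda>e. SUP z\<in>S e. F z) \<le> c"
proof -
  define G where "G = (\<lambda>e. SUP z\<in>S e. F z)"
  define l where "l = (INF e\<in>{0<..}. G e)"
  have G_mono: "G a \<le> G b" if "0 < a" "a \<le> b" for a b
    unfolding G_def using mono[OF that] by (rule SUP_subset_mono) simp
  have "(G \<longlongrightarrow> l) (at_right 0)"
  proof (rule decreasing_tendsto)
    show "\<forall>\<^sub>F e in at_right 0. l \<le> G e"
      unfolding l_def eventually_at_right_field by (auto intro!: exI[of _ 1] INF_lower)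
    fix x assume "l < x"
    then obtain e where "0 < e" "G e < x" unfolding l_def by (auto simp: INF_less_iff)
    then show "\<forall>\<^sub>F e' in at_right 0. G e' < x"
      unfolding eventually_at_right_field using G_mono
      by (intro exI[of _ e]) (meson less_imp_le order_le_less_trans)
  qed
  then have "Lim (at_right 0) G = l" by (intro tendsto_Lim) auto
  also have "l \<le> G (h / 2)" unfolding l_def using h by (intro INF_lower) auto
  also have "G (h / 2) \<le> c" unfolding G_def using h by (intro SUP_least bound) auto
  finally show ?thesis unfolding G_def .
qed

(* Boundary points of a set containing the parabolic region cannot lie inside the region, so
  near mu they satisfy eta <= K xi^2, i.e. their curvature quotient is at most K. *)
lemma boundary_below_parabola:
  assumes region: "parabolic_region \<mu> n K h \<subseteq> \<Omega>" and K: "0 \<le> K"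
    and z: "z \<in> frontier \<Omega>" "(xi_coord \<mu> n z)\<^sup>2 + (eta_coord \<mu> n z)\<^sup>2 \<le> \<epsilon>\<^sup>2" "xi_coord \<mu> n z \<noteq> 0"
    and \<epsilon>: "0 < \<epsilon>" "\<epsilon> < h"
  shows "curv_quot \<mu> n z \<le> ereal K"
proof -
  define x y where "x = xi_coord \<mu> n z" and "y = eta_coord \<mu> n z"
  have x2: "0 < x\<^sup>2" using z(3) by (simp add: x_def)
  have "z \<notin> interior \<Omega>" using z(1) by (simp add: frontier_def)
  then have "z \<notin> parabolic_region \<mu> n K h"
    using interior_maximal[OF region open_parabolic_region] by auto
  moreover have "y < h"
  proof -
    have "y\<^sup>2 \<le> \<epsilon>\<^sup>2" using z(2) unfolding x_def[symmetric] y_def[symmetric]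
      by (smt (verit) zero_le_power2)
    then show ?thesis using \<epsilon> abs_le_square_iff[of y \<epsilon>] by auto
  qed
  ultimately have "y \<le> K * x\<^sup>2"
    using K x2 by (auto simp: parabolic_region_def x_def y_def intro: order_trans[of _ 0])
  then show ?thesis
    using x2 by (simp add: curv_quot_def x_def y_def divide_le_eq)
qed

lemma gamma_u_le_of_parabolic_region:
  assumes region: "parabolic_region \<mu> n K h \<subseteq> \<Omega>" and K: "0 \<le> K" and h: "0 < h"
  shows "gamma_u \<Omega> \<mu> n \<le> ereal K"
proof -
  have sq_mono: "w \<le> b\<^sup>2" if "w \<le> a\<^sup>2" "0 < a" "a \<le> b" for w a b :: real
    using that power_mono[of a b 2] by linarith
  have "gamma_u_plus \<Omega> \<mu> n \<le> ereal K" unfolding gamma_u_plus_def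
    by (rule Lim_at_right_SUP_le[OF _ h])
       (use sq_mono boundary_below_parabola[OF region K] in \<open>auto simp: bdry_right_def\<close>)
  moreover have "gamma_u_minus \<Omega> \<mu> n \<le> ereal K" unfolding gamma_u_minus_def
    by (rule Lim_at_right_SUP_le[OF _ h])
       (use sq_mono boundary_below_parabola[OF region K] in \<open>auto simp: bdry_left_def\<close>)
  ultimately show ?thesis by (simp add: gamma_u_def)
qed

(* If the real part of a Hermitian-type quadratic form in t is nonnegative for all t, then its
  linear part vanishes: Re (cnj t C + t B) = Re (t (B + cnj C)) would otherwise be negative
  for a small multiple t of - cnj (B + cnj C). *)
lemma nonneg_form_cross_term:
  fixes C B E :: complex
  assumes nonneg: "\<And>t. 0 \<le> Re (cnj t * C + t * B + t * cnj t * E)"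
  shows "B = - cnj C"
proof (rule ccontr)
  define Z where "Z = B + cnj C"
  assume "B \<noteq> - cnj C"
  then have "Z \<noteq> 0" unfolding Z_def by (auto simp: add_eq_0_iff2)
  then have Z2: "0 < (cmod Z)\<^sup>2" by simp
  define \<delta> where "\<delta> = 1 / (\<bar>Re E\<bar> + 1)"
  have \<delta>: "0 < \<delta>" "\<delta> * Re E < 1"
    by (auto simp: \<delta>_def field_simps abs_if)
  define t where "t = - complex_of_real \<delta> * cnj Z"
  have "Re (cnj t * C + t * B) = Re (t * Z)" unfolding Z_def by (simp add: algebra_simps)
  also have "\<dots> = - \<delta> * (cmod Z)\<^sup>2"
  proof -
    have "t * Z = - complex_of_real (\<delta> * (cmod Z)\<^sup>2)"
      by (simp add: t_def mult.commute[of "cnj Z"] mult.assoc complex_norm_square[symmetric] del: of_real_power)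
    then show ?thesis by simp
  qed
  finally have linear: "Re (cnj t * C + t * B) = - \<delta> * (cmod Z)\<^sup>2" .
  have "t * cnj t = complex_of_real (\<delta>\<^sup>2 * (cmod Z)\<^sup>2)"
    by (simp add: t_def power2_eq_square mult_ac flip: complex_norm_square)
  then have quadratic: "Re (t * cnj t * E) = \<delta>\<^sup>2 * (cmod Z)\<^sup>2 * Re E" by simp
  have "0 \<le> Re (cnj t * C + t * B) + Re (t * cnj t * E)"
    using nonneg[of t] by (simp only: plus_complex.sel)
  also have "\<dots> = \<delta> * (cmod Z)\<^sup>2 * (\<delta> * Re E - 1)"
    unfolding linear quadratic by (simp add: algebra_simps power2_eq_square)
  also have "\<dots> < 0" using \<delta> Z2 by (simp add: mult_pos_neg)
  finally show False by simp
qed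

lemma square_diff_le: "(a - b)\<^sup>2 \<le> 2 * a\<^sup>2 + 2 * (b::real)\<^sup>2"
proof -
  have "2 * a\<^sup>2 + 2 * b\<^sup>2 - (a - b)\<^sup>2 = (a + b)\<^sup>2" by (simp add: power2_eq_square algebra_simps)
  then show ?thesis using zero_le_power2[of "a + b"] by linarith
qed

(* The points (s - cnj s + T E) / (1 + T G) with T = |s|^2 / rho reach every w of small positive
  real part lying above the parabola 4 Re E (Im w)^2 = rho Re w: the real part of the equation
  fixes T, the imaginary part fixes Im s, and the parabola condition makes Im s^2 <= |s|^2. *)
lemma parabola_point_attained:
  fixes E w :: complex and G \<rho> :: real
  defines "\<beta> \<equiv> Re E" and "\<gamma> \<equiv> Im E" and "\<eta> \<equiv> Re w" and "\<xi> \<equiv> Im w"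
  assumes \<beta>: "0 < \<beta>" and G: "0 < G" and \<rho>: "0 < \<rho>" and \<eta>: "0 < \<eta>"
    and small: "2 * \<eta> * G < \<beta>" "2 * \<eta> * (\<gamma>\<^sup>2 + 1) < \<rho> * \<beta>"
    and parabola: "4 * \<beta> * \<xi>\<^sup>2 < \<rho> * \<eta>"
  shows "\<exists>s. s - cnj s + complex_of_real ((cmod s)\<^sup>2 / \<rho>) * E =
             w * complex_of_real (1 + (cmod s)\<^sup>2 / \<rho> * G)"
proof -
  define T where "T = \<eta> / (\<beta> - \<eta> * G)"
  have \<eta>G: "0 < \<eta> * G" using \<eta> G by simp
  have den: "\<beta> / 2 < \<beta> - \<eta> * G" using small(1) by simp
  have T_pos: "0 < T" using \<eta> den \<beta> by (simp add: T_def)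
  have T_eq: "T * (\<beta> - \<eta> * G) = \<eta>" using den \<beta> by (simp add: T_def)
  have T_upper: "T * \<beta> \<le> 2 * \<eta>"
  proof -
    have "\<eta> * \<beta> \<le> 2 * \<eta> * (\<beta> - \<eta> * G)" using \<eta> den by (simp add: algebra_simps)
    then show ?thesis using den \<beta> by (simp add: T_def field_simps)
  qed
  have T_lower: "\<eta> \<le> T * \<beta>"
    using T_eq mult_pos_pos[OF T_pos \<eta>G] by (simp add: algebra_simps)
  have TG: "T * G \<le> 1"
  proof -
    have "(T * G) * \<beta> \<le> 2 * \<eta> * G" using T_upper G by (simp add: mult.commute mult.left_commute)
    also have "\<dots> < 1 * \<beta>" using small(1) by simp
    finally show ?thesis using \<beta> by (simp only: mult_less_cancel_right) simp
  qed
  define q where "q = (\<xi> * (1 + T * G) - T * \<gamma>) / 2"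
  have q_bound: "q\<^sup>2 \<le> T * \<rho>"
  proof -
    have first: "(\<xi> * (1 + T * G))\<^sup>2 \<le> 4 * \<xi>\<^sup>2"
    proof -
      have "(1 + T * G)\<^sup>2 \<le> 2\<^sup>2" using TG T_pos G by (intro power_mono) auto
      then have "\<xi>\<^sup>2 * (1 + T * G)\<^sup>2 \<le> \<xi>\<^sup>2 * 4" by (intro mult_left_mono) auto
      then show ?thesis by (simp add: power_mult_distrib mult.commute)
    qed
    have "\<rho> * \<eta> \<le> \<rho> * (T * \<beta>)" using T_lower \<rho> by simp
    then have "4 * \<xi>\<^sup>2 * \<beta> < \<rho> * (T * \<beta>)" using parabola by (simp add: mult_ac)
    then have second: "4 * \<xi>\<^sup>2 \<le> T * \<rho>" using \<beta> by (simp add: mult_ac)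
    have "(T * \<beta>) * (\<gamma>\<^sup>2 + 1) \<le> 2 * \<eta> * (\<gamma>\<^sup>2 + 1)"
      using T_upper by (intro mult_right_mono) auto
    also have "\<dots> < \<rho> * \<beta>" by (rule small(2))
    finally have "T * (\<gamma>\<^sup>2 + 1) < \<rho>" using \<beta> by (simp add: mult_ac)
    then have "T * \<gamma>\<^sup>2 \<le> \<rho>" using T_pos by (simp add: algebra_simps)
    then have "T * (T * \<gamma>\<^sup>2) \<le> T * \<rho>" using T_pos by simp
    then have third: "(T * \<gamma>)\<^sup>2 \<le> T * \<rho>" by (simp add: power2_eq_square mult_ac)
    have "2 * q = \<xi> * (1 + T * G) - T * \<gamma>" by (simp add: q_def)
    then have "(2 * q)\<^sup>2 = (\<xi> * (1 + T * G) - T * \<gamma>)\<^sup>2" by (rule arg_cong)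
    also have "\<dots> \<le> 2 * (\<xi> * (1 + T * G))\<^sup>2 + 2 * (T * \<gamma>)\<^sup>2" by (rule square_diff_le)
    finally show ?thesis using first second third by (simp add: power_mult_distrib)
  qed
  define s where "s = Complex (sqrt (T * \<rho> - q\<^sup>2)) q"
  have s_norm: "(cmod s)\<^sup>2 / \<rho> = T"
    using q_bound \<rho> by (simp add: s_def cmod_power2)
  have "s - cnj s + complex_of_real T * E = w * complex_of_real (1 + T * G)"
  proof (rule complex_eqI)
    show "Re (s - cnj s + complex_of_real T * E) = Re (w * complex_of_real (1 + T * G))"
      using T_eq by (simp add: s_def \<beta>_def \<eta>_def algebra_simps)
    show "Im (s - cnj s + complex_of_real T * E) = Im (w * complex_of_real (1 + T * G))"
      by (simp add: s_def q_def \<gamma>_def \<xi>_def algebra_simps)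
  qed
  then show ?thesis unfolding s_norm[symmetric] by blast
qed

lemma unit_mult_cnj: "cmod n = 1 \<Longrightarrow> n * cnj n = 1"
  by (metis complex_norm_square of_real_1 power_one)

(* Reparametrising s = cnj t C, the curve family mu + n ((cnj t C - t cnj C + |t|^2 E) /
  (1 + |t|^2 G)) fills a whole parabolic region at mu. *)
lemma curve_covers_parabolic_region:
  fixes n C E \<mu> :: complex and G :: real
  assumes n: "cmod n = 1" and G: "0 < G" and C: "C \<noteq> 0" and E: "0 < Re E"
  obtains K h where "0 \<le> K" "0 < h"
    "\<And>y. y \<in> parabolic_region \<mu> n K h \<Longrightarrow> \<exists>t. y = \<mu> + n *
        ((cnj t * C - t * cnj C + t * cnj t * E) / complex_of_real (1 + (cmod t)\<^sup>2 * G))"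
proof
  define \<rho> where "\<rho> = (cmod C)\<^sup>2"
  have \<rho>: "0 < \<rho>" using C by (simp add: \<rho>_def)
  define K where "K = 4 * Re E / \<rho>"
  define h where "h = min (Re E / (2 * G)) (\<rho> * Re E / (2 * ((Im E)\<^sup>2 + 1)))"
  show "0 \<le> K" using E \<rho> by (simp add: K_def)
  have \<gamma>: "0 < (Im E)\<^sup>2 + 1" by (simp add: add_nonneg_pos)
  then show "0 < h" using E \<rho> G unfolding h_def by (simp add: min_def)
  fix y assume "y \<in> parabolic_region \<mu> n K h"
  then have y: "0 < Re (cnj n * (y - \<mu>))" "Re (cnj n * (y - \<mu>)) < h"
      "K * (Im (cnj n * (y - \<mu>)))\<^sup>2 < Re (cnj n * (y - \<mu>))"
    by (simp_all add: parabolic_region_def eta_coord_def xi_coord_def)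
  define w where "w = cnj n * (y - \<mu>)"
  have "Re w < Re E / (2 * G)" "Re w < \<rho> * Re E / (2 * ((Im E)\<^sup>2 + 1))"
    using y(2) by (simp_all add: w_def h_def)
  then have "2 * Re w * G < Re E" "2 * Re w * ((Im E)\<^sup>2 + 1) < \<rho> * Re E"
    using G \<gamma> by (simp_all add: pos_less_divide_eq mult_ac)
  moreover have "4 * Re E * (Im w)\<^sup>2 < \<rho> * Re w"
    using y(3) \<rho> by (simp add: w_def K_def field_simps)
  ultimately obtain s where s: "s - cnj s + complex_of_real ((cmod s)\<^sup>2 / \<rho>) * E =
      w * complex_of_real (1 + (cmod s)\<^sup>2 / \<rho> * G)"
    using parabola_point_attained[of E G \<rho> w] E G \<rho> y(1) by (auto simp: w_def)
  define t where "t = cnj s / cnj C"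
  have t: "cnj t * C = s" "t * cnj C = cnj s" "(cmod t)\<^sup>2 = (cmod s)\<^sup>2 / \<rho>"
    using C by (simp_all add: t_def \<rho>_def norm_divide power_divide)
  define T where "T = (cmod s)\<^sup>2 / \<rho>"
  have "t * cnj t = complex_of_real T"
    using t(3) by (simp add: T_def flip: complex_norm_square)
  then have "cnj t * C - t * cnj C + t * cnj t * E = w * complex_of_real (1 + T * G)"
    using s by (simp add: t(1,2) T_def)
  moreover have "0 \<le> T * G" using G \<rho> by (simp add: T_def)
  then have "complex_of_real (1 + T * G) \<noteq> 0" by (simp only: of_real_eq_0_iff)
  ultimately have "(cnj t * C - t * cnj C + t * cnj t * E) / complex_of_real (1 + (cmod t)\<^sup>2 * G) = w"
    by (simp add: t(3) T_def)
  moreover have "\<mu> + n * w = y"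
    using unit_mult_cnj[OF n] by (simp add: w_def mult.assoc[symmetric])
  ultimately show "\<exists>t. y = \<mu> + n *
      ((cnj t * C - t * cnj C + t * cnj t * E) / complex_of_real (1 + (cmod t)\<^sup>2 * G))"
    by metis
qed

lemma affine_nonneg_slope:
  fixes a b :: real
  assumes "\<And>\<tau>. 0 \<le> a + \<tau> * b"
  shows "b = 0"
proof (rule ccontr)
  assume "b \<noteq> 0"
  then have "a + (- (a + 1) / b) * b = -1" by simp
  with assms[of "- (a + 1) / b"] show False by simp
qed

lemma dense_nonorthogonal:
  fixes v :: "'a::complex_inner"
  assumes "densely_defined D" and "v \<noteq> 0"
  obtains g where "g \<in> D" and "cinner v g \<noteq> 0"
proof -
  have "v \<in> closure D" using assms(1) by (simp add: densely_defined_def)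
  then obtain g where "g \<in> D" and "dist g v < norm v"
    using assms(2) by (metis closure_approachable zero_less_norm_iff)
  then have "(norm (v - g))\<^sup>2 < (norm v)\<^sup>2"
    by (simp add: dist_norm norm_minus_commute power_strict_mono)
  then have "0 < 2 * Re (cinner v g)"
    using norm_diff_sq[of v g] zero_le_power2[of "norm g"] by linarith
  then show ?thesis using that \<open>g \<in> D\<close> by fastforce
qed

lemma linear_operator_combination:
  assumes "linear_operator D A" "x \<in> D" "y \<in> D"
  shows "y + a *\<^sub>C x \<in> D" and "A (y + a *\<^sub>C x) = A y + a *\<^sub>C A x"
  using assms unfolding linear_operator_def by auto

locale numerical_range_halfplane =
  fixes D :: "'a::complex_inner set" and A :: "'a \<Rightarrow> 'a" and \<mu> n :: complex
  assumes linear: "linear_operator D A" and unit: "cmod n = 1"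
    and halfplane: "\<And>z. z \<in> numerical_range D A \<Longrightarrow> 0 \<le> Re (cnj n * (z - \<mu>))"
begin

definition shifted :: "'a \<Rightarrow> 'a" where
  "shifted h = A h - \<mu> *\<^sub>C h"

definition height :: "'a \<Rightarrow> real" where
  "height h = Re (cnj n * cinner (shifted h) h)"

lemma shifted_combination:
  assumes "x \<in> D" "y \<in> D"
  shows "y + a *\<^sub>C x \<in> D" and "shifted (y + a *\<^sub>C x) = shifted y + a *\<^sub>C shifted x"
proof -
  show "y + a *\<^sub>C x \<in> D" by (rule linear_operator_combination[OF linear assms])
  have "\<mu> *\<^sub>C (a *\<^sub>C x) = a *\<^sub>C (\<mu> *\<^sub>C x)" by (simp add: scaleC_scaleC mult.commute)
  then show "shifted (y + a *\<^sub>C x) = shifted y + a *\<^sub>C shifted x"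
    using linear_operator_combination(2)[OF linear assms, of a]
    by (simp add: shifted_def scaleC_add_right scaleC_diff_right algebra_simps)
qed

lemma shifted_quadratic:
  assumes "x \<in> D" "y \<in> D"
  shows "cinner (shifted (y + a *\<^sub>C x)) (y + a *\<^sub>C x) = cinner (shifted y) y
     + cnj a * cinner (shifted y) x + a * cinner (shifted x) y + a * cnj a * cinner (shifted x) x"
  by (simp add: shifted_combination[OF assms] cinner_add_left cinner_add_right
      cinner_scaleC_left cinner_scaleC_right algebra_simps)

lemma cinner_shifted: "cinner (shifted h) h = cinner (A h) h - \<mu> * cinner h h"
  by (simp add: shifted_def cinner_diff_left cinner_scaleC_left)

lemma Rayleigh_quotient_mem:
  assumes "h \<in> D" "h \<noteq> 0"
  shows "\<mu> + cinner (shifted h) h / cinner h h \<in> numerical_range D A"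
proof -
  define r where "r = norm h"
  have r: "0 < r" using assms(2) by (simp add: r_def)
  define k where "k = complex_of_real (1 / r) *\<^sub>C h"
  have k: "k \<in> D" "A k = complex_of_real (1 / r) *\<^sub>C A h"
    using linear assms(1) unfolding linear_operator_def k_def by auto
  have "k = (1 / r) *\<^sub>R h" by (simp only: k_def scaleR_scaleC)
  then have "norm k = 1" using r by (simp add: r_def)
  moreover have "cinner (A k) k = cinner (A h) h / cinner h h"
  proof -
    have "cinner (A k) k = complex_of_real (1 / r * (1 / r)) * cinner (A h) h"
      unfolding k(2) by (simp add: k_def cinner_scaleC_left cinner_scaleC_right)
    also have "\<dots> = cinner (A h) h / cinner h h"
      using r by (simp add: cinner_self_norm r_def power2_eq_square field_simps)
    finally show ?thesis .
  qed
  moreover have "cinner h h \<noteq> 0" using assms(2) by (simp add: cinner_self_norm)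
  ultimately show ?thesis
    using k(1) unfolding numerical_range_def cinner_shifted by (force simp: field_simps)
qed

lemma height_nonneg:
  assumes "h \<in> D"
  shows "0 \<le> height h"
proof (cases "h = 0")
  case False
  define r where "r = (norm h)\<^sup>2"
  have r: "0 < r" using False by (simp add: r_def)
  have "0 \<le> Re (cnj n * (cinner (shifted h) h / cinner h h))"
    using halfplane[OF Rayleigh_quotient_mem[OF assms False]] by simp
  also have "\<dots> = height h / r"
    by (simp add: height_def cinner_self_norm r_def Re_divide_of_real flip: of_real_power)
  finally show ?thesis using r by (simp add: zero_le_divide_iff)
qed (simp add: height_def shifted_def)

(* A vector of height zero is isotropic for the height form: adding multiples of it does not
  change heights (the cross term is affine in a real parameter and nonnegative, hence zero). *)
lemma height_add_null:
  assumes x: "x \<in> D" and y: "y \<in> D" and null: "height x = 0"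
  shows "height (y + a *\<^sub>C x) = height y"
proof -
  have expand: "height (y + b *\<^sub>C x) =
      height y + Re (cnj n * (cnj b * cinner (shifted y) x + b * cinner (shifted x) y))" for b
  proof -
    have "b * cnj b = complex_of_real ((cmod b)\<^sup>2)" by (rule complex_norm_square[symmetric])
    then have "height (y + b *\<^sub>C x) = height y +
        Re (cnj n * (cnj b * cinner (shifted y) x + b * cinner (shifted x) y)) + (cmod b)\<^sup>2 * height x"
      unfolding height_def shifted_quadratic[OF x y] by (simp add: algebra_simps)
    then show ?thesis using null by simp
  qed
  define R where "R = Re (cnj n * (cnj a * cinner (shifted y) x + a * cinner (shifted x) y))"
  have "0 \<le> height y + \<tau> * R" for \<tau> :: real
  proof -
    have "0 \<le> height (y + (complex_of_real \<tau> * a) *\<^sub>C x)"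
      by (intro height_nonneg shifted_combination[OF x y])
    also have "\<dots> = height y + \<tau> * R" unfolding expand R_def by (simp add: algebra_simps)
    finally show ?thesis .
  qed
  then have "R = 0" by (rule affine_nonneg_slope)
  then show ?thesis using expand[of a] by (simp add: R_def)
qed

lemma positive_height_exists:
  assumes "interior (numerical_range D A) \<noteq> {}"
  obtains h where "h \<in> D" and "0 < height h"
proof -
  obtain z0 e where e: "0 < e" "ball z0 e \<subseteq> numerical_range D A"
    using assms by (meson ex_in_conv mem_interior)
  define z1 where "z1 = z0 + complex_of_real (e / 2) * n"
  have "z0 \<in> numerical_range D A" "z1 \<in> numerical_range D A"
    using e unit by (auto simp: z1_def dist_norm norm_mult subset_iff)
  then obtain h where h: "h \<in> D" "norm h = 1" "cinner (A h) h = z1"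
    unfolding numerical_range_def by auto
  have "height h = Re (cnj n * (z0 - \<mu>)) + e / 2 * Re (cnj n * n)"
    using h by (simp add: height_def cinner_shifted cinner_self_norm z1_def algebra_simps)
  also have "Re (cnj n * n) = 1" using unit_mult_cnj[OF unit] by (simp add: mult.commute)
  finally have "e / 2 \<le> height h" using halfplane[OF \<open>z0 \<in> numerical_range D A\<close>] by simp
  then show ?thesis using that h(1) e(1) by simp
qed

(* Both properties are obtained by projecting orthogonally to f, which preserves heights
  because f itself has height zero. *)
lemma transversal_direction_exists:
  assumes dense: "densely_defined D" and interior: "interior (numerical_range D A) \<noteq> {}"
    and f: "f \<in> D" "norm f = 1" "cinner (A f) f = \<mu>" and not_eigen: "shifted f \<noteq> 0"
  obtains g where "g \<in> D" "cinner g f = 0" "cinner (shifted f) g \<noteq> 0" "0 < height g"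
proof -
  have ff: "cinner f f = 1" using f(2) by (simp add: cinner_self_norm)
  have vf: "cinner (shifted f) f = 0" using f(3) by (simp add: cinner_shifted ff)
  have null_f: "height f = 0" by (simp add: height_def vf)
  define proj where "proj u = u + (- cinner u f) *\<^sub>C f" for u
  have proj: "proj u \<in> D" "cinner (proj u) f = 0" "cinner (shifted f) (proj u) = cinner (shifted f) u"
      "height (proj u) = height u" if "u \<in> D" for u
    using shifted_combination(1)[OF f(1) that] height_add_null[OF f(1) that null_f]
    by (simp_all add: proj_def cinner_add_left cinner_add_right cinner_scaleC_left
        cinner_scaleC_right ff vf)
  obtain g0 where g0: "g0 \<in> D" "cinner (shifted f) g0 \<noteq> 0"
    using dense_nonorthogonal[OF dense not_eigen] by blast
  obtain h where h: "h \<in> D" "0 < height h" using positive_height_exists[OF interior] by blast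
  define g1 h1 where "g1 = proj g0" and "h1 = proj h"
  consider "0 < height g1" | "height g1 = 0" "cinner (shifted f) h1 \<noteq> 0"
    | "height g1 = 0" "cinner (shifted f) h1 = 0"
    using height_nonneg[OF proj(1)[OF g0(1)]] by (fastforce simp: g1_def)
  then show ?thesis
  proof cases
    case 1
    then show ?thesis using that proj[OF g0(1)] g0(2) by (simp add: g1_def)
  next
    case 2
    then show ?thesis using that proj[OF h(1)] h(2) by (simp add: h1_def)
  next
    case 3
    have "h1 + 1 *\<^sub>C g1 \<in> D" "height (h1 + 1 *\<^sub>C g1) = height h"
      using shifted_combination(1) height_add_null 3(1) proj(1,4) g0(1) h(1)
      by (simp_all add: g1_def h1_def)
    moreover have "cinner (h1 + 1 *\<^sub>C g1) f = 0"
      using proj(2)[OF g0(1)] proj(2)[OF h(1)]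
      by (simp add: g1_def h1_def cinner_add_left cinner_scaleC_left)
    moreover have "cinner (shifted f) (h1 + 1 *\<^sub>C g1) = cinner (shifted f) h1 + cinner (shifted f) g1"
      by (simp add: cinner_add_right cinner_scaleC_right)
    then have "cinner (shifted f) (h1 + 1 *\<^sub>C g1) \<noteq> 0"
      using 3(2) proj(3)[OF g0(1)] g0(2) by (simp add: g1_def)
    ultimately show ?thesis using that[of "h1 + 1 *\<^sub>C g1"] h(2) by simp
  qed
qed

lemma curve_in_numerical_range:
  assumes f: "f \<in> D" "norm f = 1" "cinner (A f) f = \<mu>" and g: "g \<in> D" "cinner g f = 0"
  shows "\<mu> + (cnj t * cinner (shifted f) g + t * cinner (shifted g) f + t * cnj t * cinner (shifted g) g)
      / complex_of_real (1 + (cmod t)\<^sup>2 * (norm g)\<^sup>2) \<in> numerical_range D A"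
proof -
  have ff: "cinner f f = 1" using f(2) by (simp add: cinner_self_norm)
  have fg: "cinner f g = 0" using g(2) by (subst cinner_commute) simp
  define h where "h = f + t *\<^sub>C g"
  have "cinner h f = 1" by (simp add: h_def cinner_add_left cinner_scaleC_left ff g(2))
  then have "h \<noteq> 0" by auto
  moreover have "cinner (shifted h) h = cnj t * cinner (shifted f) g + t * cinner (shifted g) f
      + t * cnj t * cinner (shifted g) g"
    using f(3) unfolding h_def shifted_quadratic[OF g(1) f(1)] by (simp add: cinner_shifted ff)
  moreover have "cinner h h = complex_of_real (1 + (cmod t)\<^sup>2 * (norm g)\<^sup>2)"
  proof -
    have "cinner h h = cinner f f + cnj t * cinner f g + t * cinner g f + t * cnj t * cinner g g"
      by (simp only: h_def cinner_expand)
    also have "\<dots> = 1 + complex_of_real ((cmod t)\<^sup>2) * complex_of_real ((norm g)\<^sup>2)"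
      by (simp only: ff fg g(2) cinner_self_norm[of g] complex_norm_square) simp
    finally show ?thesis by simp
  qed
  ultimately show ?thesis
    using Rayleigh_quotient_mem[of h] shifted_combination(1)[OF g(1) f(1)] by (simp add: h_def)
qed

(* By the half-plane condition the cross terms of this family are tied together, which puts it
  in the form of curve_covers_parabolic_region: the numerical range contains a parabolic region. *)
lemma parabolic_region_in_numerical_range:
  assumes f: "f \<in> D" "norm f = 1" "cinner (A f) f = \<mu>"
    and g: "g \<in> D" "cinner g f = 0" "cinner (shifted f) g \<noteq> 0" "0 < height g"
  obtains K h where "0 \<le> K" "0 < h" "parabolic_region \<mu> n K h \<subseteq> numerical_range D A"
proof -
  define c b E where "c = cinner (shifted f) g" and "b = cinner (shifted g) f"
    and "E = cinner (shifted g) g"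
  define G where "G = (norm g)\<^sup>2"
  have G: "0 < G" using g(3) by (auto simp: G_def)
  define X where "X t = cnj t * c + t * b + t * cnj t * E" for t
  have den: "0 < 1 + (cmod t)\<^sup>2 * G" for t using G by (simp add: add_pos_nonneg)
  have curve: "\<mu> + X t / complex_of_real (1 + (cmod t)\<^sup>2 * G) \<in> numerical_range D A" for t
    using curve_in_numerical_range[OF f g(1,2)] by (simp add: X_def c_def b_def E_def G_def)
  have "0 \<le> Re (cnj t * (cnj n * c) + t * (cnj n * b) + t * cnj t * (cnj n * E))" for t
  proof -
    have "0 \<le> Re (cnj n * (X t / complex_of_real (1 + (cmod t)\<^sup>2 * G)))"
      using halfplane[OF curve[of t]] by simp
    also have "\<dots> = Re (cnj n * X t) / (1 + (cmod t)\<^sup>2 * G)"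
      by (simp only: times_divide_eq_right Re_divide_of_real)
    finally show ?thesis using den[of t] by (simp add: zero_le_divide_iff X_def algebra_simps)
  qed
  then have cross: "cnj n * b = - cnj (cnj n * c)" by (rule nonneg_form_cross_term)
  have C: "cnj n * c \<noteq> 0" using g(3) unit by (auto simp: c_def)
  have "0 < Re (cnj n * E)" using g(4) by (simp add: height_def E_def)
  then obtain K h where K: "0 \<le> K" "0 < h" and cover: "\<And>y. y \<in> parabolic_region \<mu> n K h \<Longrightarrow>
      \<exists>t. y = \<mu> + n * ((cnj t * (cnj n * c) - t * cnj (cnj n * c) + t * cnj t * (cnj n * E))
        / complex_of_real (1 + (cmod t)\<^sup>2 * G))"
    using curve_covers_parabolic_region[OF unit G C] by blast
  have "parabolic_region \<mu> n K h \<subseteq> numerical_range D A"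
  proof
    fix y assume "y \<in> parabolic_region \<mu> n K h"
    then obtain t where y: "y = \<mu> + n * ((cnj t * (cnj n * c) - t * cnj (cnj n * c)
        + t * cnj t * (cnj n * E)) / complex_of_real (1 + (cmod t)\<^sup>2 * G))"
      using cover by blast
    have "t * cnj (cnj n * c) = - (t * (cnj n * b))"
      by (simp only: cross mult_minus_right minus_minus)
    then have "cnj t * (cnj n * c) - t * cnj (cnj n * c) + t * cnj t * (cnj n * E) = cnj n * X t"
      unfolding X_def by (simp only:) (simp add: algebra_simps)
    then have "y = \<mu> + (n * cnj n) * X t / complex_of_real (1 + (cmod t)\<^sup>2 * G)"
      by (simp add: y mult.assoc)
    then show "y \<in> numerical_range D A" using curve[of t] unit_mult_cnj[OF unit] by simp
  qed
  then show ?thesis using that K by blast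
qed

end

theorem mainTheorem2:
  fixes D :: "'a::chilbert_space set" and A :: "'a \<Rightarrow> 'a" and \<mu> :: complex
  assumes "linear_operator D A"
    and "densely_defined D"
    and "closed_operator D A"
    and "interior (numerical_range D A) \<noteq> {}"
    and "numerical_range D A \<noteq> UNIV"
    and "\<mu> \<in> frontier (numerical_range D A)"
    and "infinite_upper_curvature (closure (numerical_range D A)) \<mu>"
    and "\<mu> \<in> numerical_range D A"
  shows "eigenvalue D A \<mu>"
proof (rule ccontr)
  assume not_eigen: "\<not> eigenvalue D A \<mu>"
  define N where "N = numerical_range D A"
  obtain f where f: "f \<in> D" "norm f = 1" "cinner (A f) f = \<mu>"
    using assms(8) unfolding numerical_range_def by auto
  obtain n where frame: "curvature_frame (closure N) \<mu> n"
    and infinite: "gamma_u (closure N) \<mu> n = \<infinity>"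
    using assms(7) unfolding infinite_upper_curvature_def N_def by auto
  interpret numerical_range_halfplane D A \<mu> n
    using assms(1) frame closure_subset unfolding curvature_frame_def N_def
    by unfold_locales auto
  have "shifted f \<noteq> 0"
    using not_eigen f by (auto simp: eigenvalue_def shifted_def)
  then obtain g where g: "g \<in> D" "cinner g f = 0" "cinner (shifted f) g \<noteq> 0" "0 < height g"
    using transversal_direction_exists[OF assms(2,4) f] by blast
  obtain K h where "0 \<le> K" "0 < h" "parabolic_region \<mu> n K h \<subseteq> N"
    using parabolic_region_in_numerical_range[OF f g] unfolding N_def by blast
  then have "gamma_u (closure N) \<mu> n \<le> ereal K"
    using closure_subset by (intro gamma_u_le_of_parabolic_region) auto
  with infinite show False by simp
qed

end
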